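(* Let $0<\beta<\gamma\le1$, $p>0$, $m\ge0$ an integer, and $\theta=(k_r)$ a lacunary sequence. Then $N_\theta^\beta(p,F,\Delta^m)\subset N_\theta^\gamma(p,F,\Delta^m)$, and this inclusion is strict.
   Context: A fuzzy number is a map $X:\mathbb{R}\to[0,1]$ which is normal, fuzzy convex, upper semicontinuous, with compact closure of $\{t:X(t)>0\}$; $L(\mathbb{R})$ is the set of fuzzy numbers. Level sets $[X]^\alpha=\{t:X(t)\ge\alpha\}$ ($\alpha\in(0,1]$), $[X]^0=\overline{\{t:X(t)>0\}}$, are compact intervals $[u^\alpha,v^\alpha]$. Subtraction: $[X-Y]^\alpha=[u_1^\alpha-v_2^\alpha,v_1^\alpha-u_2^\alpha]$. Metric: $d(X,Y)=\sup_{\alpha\in[0,1]}\max\{|u_1^\alpha-u_2^\alpha|,|v_1^\alpha-v_2^\alpha|\}$. $(\Delta^0X)_k=X_k$, $(\Delta^1X)_k=X_k-X_{k+1}$, $(\Delta^mX)_k=(\Delta^1(\Delta^{m-1}X))_k$. A lacunary sequence is an increasing integer sequence $\theta=(k_r)_{r\ge0}$ with $k_0=0$, $h_r=k_r-k_{r-1}\to\infty$; $I_r=(k_{r-1},k_r]$. For $\beta\in(0,1]$, $N_\theta^\beta(p,F,\Delta^m)$ is the set of sequences $X=(X_k)$ of fuzzy numbers for which there is $X_0\in L(\mathbb{R})$ with $\lim_r\frac{1}{h_r^\beta}\sum_{k\in I_r}d(\Delta^mX_k,X_0)^p=0$. *)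

theory Defs
  imports "HOL-Analysis.Analysis"
begin

definition fuzzy_number :: "(real \<Rightarrow> real) \<Rightarrow> bool" where
  "fuzzy_number X \<longleftrightarrow>
     (\<forall>t. 0 \<le> X t \<and> X t \<le> 1) \<and>
     (\<exists>t. X t = 1) \<and>
     (\<forall>x y l. 0 \<le> l \<and> l \<le> 1 \<longrightarrow> min (X x) (X y) \<le> X (l * x + (1 - l) * y)) \<and>
     (\<forall>t e. 0 < e \<longrightarrow> (\<exists>d>0. \<forall>s. \<bar>s - t\<bar> < d \<longrightarrow> X s < X t + e)) \<and>
     compact (closure {t. 0 < X t})"

definition level :: "(real \<Rightarrow> real) \<Rightarrow> real \<Rightarrow> real set" where
  "level X a = (if a = 0 then closure {t. 0 < X t} else {t. a \<le> X t})"

definition lo :: "(real \<Rightarrow> real) \<Rightarrow> real \<Rightarrow> real" where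
  "lo X a = Inf (level X a)"

definition hi :: "(real \<Rightarrow> real) \<Rightarrow> real \<Rightarrow> real" where
  "hi X a = Sup (level X a)"

text \<open>Subtraction: the fuzzy number whose alpha-level sets are
  [lo X a - hi Y a, hi X a - lo Y a]; its membership function is recovered
  from these level sets.\<close>

definition fsub :: "(real \<Rightarrow> real) \<Rightarrow> (real \<Rightarrow> real) \<Rightarrow> (real \<Rightarrow> real)" where
  "fsub X Y = (\<lambda>t. Sup (insert 0 {a. 0 < a \<and> a \<le> 1 \<and>
                   lo X a - hi Y a \<le> t \<and> t \<le> hi X a - lo Y a}))"

definition fdist :: "(real \<Rightarrow> real) \<Rightarrow> (real \<Rightarrow> real) \<Rightarrow> real" where
  "fdist X Y = (SUP a\<in>{0..1}. max \<bar>lo X a - lo Y a\<bar> \<bar>hi X a - hi Y a\<bar>)"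

fun fdelta :: "nat \<Rightarrow> (nat \<Rightarrow> real \<Rightarrow> real) \<Rightarrow> nat \<Rightarrow> real \<Rightarrow> real" where
  "fdelta 0 X = X"
| "fdelta (Suc m) X = (\<lambda>k. fsub (fdelta m X k) (fdelta m X (Suc k)))"

text \<open>Lacunary sequences; h_(r+1) = k_(r+1) - k_r, I_(r+1) = (k_r, k_(r+1)].\<close>

definition lacunary :: "(nat \<Rightarrow> nat) \<Rightarrow> bool" where
  "lacunary \<theta> \<longleftrightarrow> \<theta> 0 = 0 \<and> strict_mono \<theta> \<and>
     filterlim (\<lambda>r. \<theta> (Suc r) - \<theta> r) at_top at_top"

definition N_theta :: "(nat \<Rightarrow> nat) \<Rightarrow> real \<Rightarrow> real \<Rightarrow> nat \<Rightarrow> (nat \<Rightarrow> real \<Rightarrow> real) set" where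
  "N_theta \<theta> \<beta> p m = {X. (\<forall>k. fuzzy_number (X k)) \<and>
     (\<exists>X0. fuzzy_number X0 \<and>
        (\<lambda>r. (1 / real (\<theta> (Suc r) - \<theta> r) powr \<beta>) *
              (\<Sum>k\<in>{\<theta> r<..\<theta> (Suc r)}. fdist (fdelta m X k) X0 powr p))
        \<longlonglongrightarrow> 0)}"

end

theory Submission
  imports Defs
begin

text \<open>Embedding the reals as crisp fuzzy numbers turns \<open>fsub\<close>, \<open>fdist\<close> and \<open>fdelta\<close> into
  subtraction, absolute difference and the ordinary difference operator, and every real
  sequence is an \<open>m\<close>-th difference. It therefore suffices to find a 0-1 sequence \<open>y\<close>
  whose \<open>\<gamma>\<close>-means tend to 0 while its \<open>\<beta>\<close>-means do not tend to 0 around any fuzzy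
  number. On the block \<open>I\<^sub>r\<close> of length \<open>h\<^sub>r\<close> let \<open>y\<close> be 1 on the first
  \<open>n\<^sub>r = \<lfloor>h\<^sub>r\<^sup>\<delta>\<rfloor>\<close> places and 0 elsewhere, with \<open>\<beta> < \<delta> < \<gamma>\<close>. Around
  \<open>0\<close> the \<open>\<gamma>\<close>-mean is \<open>n\<^sub>r / h\<^sub>r\<^sup>\<gamma> \<rightarrow> 0\<close>. A fuzzy number \<open>X\<^sub>0\<close> has distance at
  least \<open>1/2\<close> from \<open>0\<close> or from \<open>1\<close>, and both values are taken at least \<open>n\<^sub>r\<close> times
  on \<open>I\<^sub>r\<close>, so the \<open>\<beta>\<close>-mean is at least of order \<open>n\<^sub>r / h\<^sub>r\<^sup>\<beta>\<close>, which does not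
  tend to 0.\<close>

definition lacunary_mean :: "(nat \<Rightarrow> nat) \<Rightarrow> real \<Rightarrow> (nat \<Rightarrow> real) \<Rightarrow> nat \<Rightarrow> real" where
  "lacunary_mean \<theta> \<beta> f r =
     1 / real (\<theta> (Suc r) - \<theta> r) powr \<beta> * (\<Sum>k\<in>{\<theta> r<..\<theta> (Suc r)}. f k)"

lemma mem_N_theta_iff:
  "X \<in> N_theta \<theta> \<beta> p m \<longleftrightarrow> (\<forall>k. fuzzy_number (X k)) \<and>
     (\<exists>X0. fuzzy_number X0 \<and> lacunary_mean \<theta> \<beta> (\<lambda>k. fdist (fdelta m X k) X0 powr p) \<longlonglongrightarrow> 0)"
  unfolding N_theta_def lacunary_mean_def[abs_def] by simp

lemma strict_mono_Suc_diff_ge_1: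
  fixes \<theta> :: "nat \<Rightarrow> nat"
  assumes "strict_mono \<theta>"
  shows "1 \<le> \<theta> (Suc r) - \<theta> r"
  using strict_monoD[OF assms, of r "Suc r"] by simp

lemma lacunary_mean_exponent_antimono:
  assumes "strict_mono \<theta>" and "\<beta> \<le> \<gamma>" and "\<And>k. 0 \<le> f k"
  shows "lacunary_mean \<theta> \<gamma> f r \<le> lacunary_mean \<theta> \<beta> f r"
proof -
  have "1 \<le> real (\<theta> (Suc r) - \<theta> r)"
    using strict_mono_Suc_diff_ge_1[OF assms(1)] by simp
  then have "1 / real (\<theta> (Suc r) - \<theta> r) powr \<gamma> \<le> 1 / real (\<theta> (Suc r) - \<theta> r) powr \<beta>"
    using assms(2) by (intro divide_left_mono powr_mono) auto
  then show ?thesis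
    unfolding lacunary_mean_def using assms(3) by (intro mult_right_mono sum_nonneg) auto
qed

lemma N_theta_exponent_mono:
  assumes "strict_mono \<theta>" and "\<beta> \<le> \<gamma>"
  shows "N_theta \<theta> \<beta> p m \<subseteq> N_theta \<theta> \<gamma> p m"
proof
  fix X assume "X \<in> N_theta \<theta> \<beta> p m"
  then obtain X0 where fuzzy: "\<forall>k. fuzzy_number (X k)" "fuzzy_number X0"
    and lim: "lacunary_mean \<theta> \<beta> (\<lambda>k. fdist (fdelta m X k) X0 powr p) \<longlonglongrightarrow> 0"
    unfolding mem_N_theta_iff by blast
  have "lacunary_mean \<theta> \<gamma> (\<lambda>k. fdist (fdelta m X k) X0 powr p) \<longlonglongrightarrow> 0"
  proof (rule tendsto_sandwich[OF _ _ tendsto_const lim])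
    show "\<forall>\<^sub>F r in sequentially. 0 \<le> lacunary_mean \<theta> \<gamma> (\<lambda>k. fdist (fdelta m X k) X0 powr p) r"
      by (simp add: lacunary_mean_def sum_nonneg)
    show "\<forall>\<^sub>F r in sequentially. lacunary_mean \<theta> \<gamma> (\<lambda>k. fdist (fdelta m X k) X0 powr p) r
            \<le> lacunary_mean \<theta> \<beta> (\<lambda>k. fdist (fdelta m X k) X0 powr p) r"
      using assms by (intro always_eventually allI lacunary_mean_exponent_antimono) auto
  qed
  with fuzzy show "X \<in> N_theta \<theta> \<gamma> p m"
    unfolding mem_N_theta_iff by blast
qed

definition crisp :: "real \<Rightarrow> real \<Rightarrow> real" where
  "crisp c = (\<lambda>t. if t = c then 1 else 0)"

lemma fuzzy_number_crisp: "fuzzy_number (crisp c)"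
proof -
  have support: "{t. 0 < crisp c t} = {c}" by (auto simp: crisp_def)
  have usc: "\<exists>d>0. \<forall>s. \<bar>s - t\<bar> < d \<longrightarrow> crisp c s < crisp c t + e" if "0 < e" for t e :: real
  proof (cases "t = c")
    case True with that show ?thesis by (intro exI[of _ 1]) (auto simp: crisp_def)
  next
    case False with that show ?thesis by (intro exI[of _ "\<bar>t - c\<bar>"]) (auto simp: crisp_def)
  qed
  have convex: "min (crisp c x) (crisp c y) \<le> crisp c (l * x + (1 - l) * y)" for x y l
  proof (cases "x = c \<and> y = c")
    case True
    then have "l * x + (1 - l) * y = c" by (simp add: algebra_simps)
    then show ?thesis by (simp add: crisp_def)
  qed (auto simp: crisp_def)
  show ?thesis
    unfolding fuzzy_number_def support using usc convex by (auto simp: crisp_def intro: exI[of _ c])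
qed

lemma level_crisp: "0 \<le> a \<Longrightarrow> a \<le> 1 \<Longrightarrow> level (crisp c) a = {c}"
  by (auto simp: level_def crisp_def)

lemma lo_crisp: "0 \<le> a \<Longrightarrow> a \<le> 1 \<Longrightarrow> lo (crisp c) a = c"
  by (simp add: lo_def level_crisp)

lemma hi_crisp: "0 \<le> a \<Longrightarrow> a \<le> 1 \<Longrightarrow> hi (crisp c) a = c"
  by (simp add: hi_def level_crisp)

lemma fsub_crisp: "fsub (crisp c) (crisp d) = crisp (c - d)"
proof
  fix t
  have levels: "{a. 0 < a \<and> a \<le> 1 \<and> lo (crisp c) a - hi (crisp d) a \<le> t \<and> t \<le> hi (crisp c) a - lo (crisp d) a}
        = (if t = c - d then {0<..1} else {})"
    by (auto simp: lo_crisp hi_crisp)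
  have "insert 0 {0<..(1::real)} = {0..1}" by auto
  then show "fsub (crisp c) (crisp d) t = crisp (c - d) t"
    unfolding fsub_def levels by (simp add: crisp_def)
qed

lemma fdist_crisp: "fdist (crisp a) (crisp b) = \<bar>a - b\<bar>"
proof -
  have "fdist (crisp a) (crisp b) = (SUP x\<in>{0..1::real}. \<bar>a - b\<bar>)"
    unfolding fdist_def by (rule SUP_cong) (auto simp: lo_crisp hi_crisp)
  then show ?thesis by simp
qed

lemma fuzzy_number_endpoints_bounded:
  assumes "fuzzy_number X"
  obtains B where "\<And>a. a \<in> {0..1} \<Longrightarrow> \<bar>lo X a\<bar> \<le> B \<and> \<bar>hi X a\<bar> \<le> B"
proof -
  let ?K = "closure {t. 0 < X t}"
  from assms obtain t1 where t1: "X t1 = 1" and "compact ?K" by (auto simp: fuzzy_number_def)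
  then have "bounded ?K" by (simp add: compact_imp_bounded)
  then obtain B where B: "\<And>x. x \<in> ?K \<Longrightarrow> \<bar>x\<bar> \<le> B"
    unfolding bounded_iff real_norm_def by blast
  have "\<bar>lo X a\<bar> \<le> B \<and> \<bar>hi X a\<bar> \<le> B" if a: "a \<in> {0..1}" for a
  proof -
    have in_K: "level X a \<subseteq> ?K" and t1_in: "t1 \<in> level X a"
      using a t1 closure_subset[of "{t. 0 < X t}"] by (auto simp: level_def)
    then have bounded: "\<And>x. x \<in> level X a \<Longrightarrow> -B \<le> x \<and> x \<le> B" using B by fastforce
    then have "-B \<le> Inf (level X a)" "Sup (level X a) \<le> B"
      using t1_in by (auto intro!: cInf_greatest cSup_least)
    moreover have "Inf (level X a) \<le> t1" "t1 \<le> Sup (level X a)"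
      using bounded t1_in by (auto intro!: cInf_lower cSup_upper bdd_belowI bdd_aboveI)
    ultimately show ?thesis
      using bounded[OF t1_in] unfolding lo_def hi_def by linarith
  qed
  then show ?thesis using that by blast
qed

lemma abs_diff_lo_le_fdist_crisp:
  assumes "fuzzy_number X"
  shows "\<bar>c - lo X 1\<bar> \<le> fdist (crisp c) X"
proof -
  obtain B where B: "\<And>a. a \<in> {0..1} \<Longrightarrow> \<bar>lo X a\<bar> \<le> B \<and> \<bar>hi X a\<bar> \<le> B"
    using fuzzy_number_endpoints_bounded[OF assms] by blast
  have "bdd_above ((\<lambda>a. max \<bar>lo (crisp c) a - lo X a\<bar> \<bar>hi (crisp c) a - hi X a\<bar>) ` {0..1})"
  proof (rule bdd_aboveI2)
    fix a :: real assume "a \<in> {0..1}"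
    with B[OF this] show "max \<bar>lo (crisp c) a - lo X a\<bar> \<bar>hi (crisp c) a - hi X a\<bar> \<le> \<bar>c\<bar> + B"
      by (simp add: lo_crisp hi_crisp) arith
  qed
  then have "max \<bar>lo (crisp c) 1 - lo X 1\<bar> \<bar>hi (crisp c) 1 - hi X 1\<bar> \<le> fdist (crisp c) X"
    unfolding fdist_def by (rule cSUP_upper[rotated]) auto
  then show ?thesis by (simp add: lo_crisp hi_crisp)
qed

lemma abs_diff_le_fdist_crisp_add:
  assumes "fuzzy_number X"
  shows "\<bar>a - b\<bar> \<le> fdist (crisp a) X + fdist (crisp b) X"
  using abs_diff_lo_le_fdist_crisp[OF assms, of a] abs_diff_lo_le_fdist_crisp[OF assms, of b]
  by linarith

fun real_delta :: "nat \<Rightarrow> (nat \<Rightarrow> real) \<Rightarrow> nat \<Rightarrow> real" where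
  "real_delta 0 x = x"
| "real_delta (Suc m) x = (\<lambda>k. real_delta m x k - real_delta m x (Suc k))"

lemma fdelta_crisp: "fdelta m (\<lambda>k. crisp (x k)) = (\<lambda>k. crisp (real_delta m x k))"
  by (induction m) (auto simp: fsub_crisp)

definition neg_partial_sums :: "(nat \<Rightarrow> real) \<Rightarrow> nat \<Rightarrow> real" where
  "neg_partial_sums y k = - (\<Sum>j<k. y j)"

lemma real_delta_funpow_neg_partial_sums: "real_delta m ((neg_partial_sums ^^ m) y) = y"
proof (induction m arbitrary: y)
  case (Suc m)
  have "real_delta (Suc m) ((neg_partial_sums ^^ Suc m) y)
      = (\<lambda>k. neg_partial_sums y k - neg_partial_sums y (Suc k))"
    by (simp only: funpow_Suc_right o_apply real_delta.simps Suc)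
  also have "\<dots> = y" by (auto simp: neg_partial_sums_def)
  finally show ?case .
qed simp

lemma mem_N_theta_crisp_funpow_neg_partial_sums_iff:
  "(\<lambda>k. crisp ((neg_partial_sums ^^ m) y k)) \<in> N_theta \<theta> \<beta> p m \<longleftrightarrow>
     (\<exists>X0. fuzzy_number X0 \<and> lacunary_mean \<theta> \<beta> (\<lambda>k. fdist (crisp (y k)) X0 powr p) \<longlonglongrightarrow> 0)"
  unfolding mem_N_theta_iff fdelta_crisp real_delta_funpow_neg_partial_sums
  by (simp add: fuzzy_number_crisp)

definition block_indicator :: "(nat \<Rightarrow> nat) \<Rightarrow> (nat \<Rightarrow> nat) \<Rightarrow> nat \<Rightarrow> real" where
  "block_indicator \<theta> n k = (if \<exists>r. \<theta> r < k \<and> k \<le> \<theta> r + n r then 1 else 0)"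

lemma strict_mono_block_unique:
  fixes \<theta> :: "nat \<Rightarrow> nat"
  assumes mono: "strict_mono \<theta>"
    and "\<theta> r < k" "k \<le> \<theta> (Suc r)" "\<theta> s < k" "k \<le> \<theta> (Suc s)"
  shows "s = r"
proof (rule ccontr)
  assume "s \<noteq> r"
  then consider "Suc s \<le> r" | "Suc r \<le> s" by linarith
  then show False
  proof cases
    case 1
    then have "\<theta> (Suc s) \<le> \<theta> r" using strict_mono_less_eq[OF mono] by blast
    with assms show False by linarith
  next
    case 2
    then have "\<theta> (Suc r) \<le> \<theta> s" using strict_mono_less_eq[OF mono] by blast
    with assms show False by linarith
  qed
qed

lemma block_indicator_eq:
  assumes mono: "strict_mono \<theta>" and n_le: "\<And>s. n s \<le> \<theta> (Suc s) - \<theta> s"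
    and k: "\<theta> r < k" "k \<le> \<theta> (Suc r)"
  shows "block_indicator \<theta> n k = (if k \<le> \<theta> r + n r then 1 else 0)"
proof -
  have "(\<exists>s. \<theta> s < k \<and> k \<le> \<theta> s + n s) \<longleftrightarrow> k \<le> \<theta> r + n r"
  proof
    assume "\<exists>s. \<theta> s < k \<and> k \<le> \<theta> s + n s"
    then obtain s where s: "\<theta> s < k" "k \<le> \<theta> s + n s" by blast
    moreover have "k \<le> \<theta> (Suc s)" using s n_le[of s] by linarith
    ultimately have "s = r" using strict_mono_block_unique[OF mono k] by blast
    with s show "k \<le> \<theta> r + n r" by simp
  qed (use k in blast)
  then show ?thesis unfolding block_indicator_def by simp
qed

lemma sum_if_le_split:
  fixes u v :: "'a::comm_semiring_1"
  assumes "a + n \<le> b"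
  shows "(\<Sum>k\<in>{a<..b}. if k \<le> a + n then u else v) = of_nat n * u + of_nat (b - a - n) * v"
proof -
  have split: "{a<..b} = {a<..a + n} \<union> {a + n<..b}" using assms by auto
  have "(\<Sum>k\<in>{a<..b}. if k \<le> a + n then u else v)
      = (\<Sum>k\<in>{a<..a + n}. if k \<le> a + n then u else v) + (\<Sum>k\<in>{a + n<..b}. if k \<le> a + n then u else v)"
    unfolding split by (rule sum.union_disjoint) auto
  also have "\<dots> = (\<Sum>k\<in>{a<..a + n}. u) + (\<Sum>k\<in>{a + n<..b}. v)"
    by (intro arg_cong2[where f = "(+)"] sum.cong) auto
  finally show ?thesis by simp
qed

lemma sum_block_indicator:
  fixes g :: "real \<Rightarrow> real"
  assumes mono: "strict_mono \<theta>" and n_le: "\<And>s. n s \<le> \<theta> (Suc s) - \<theta> s"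
  shows "(\<Sum>k\<in>{\<theta> r<..\<theta> (Suc r)}. g (block_indicator \<theta> n k))
       = real (n r) * g 1 + real (\<theta> (Suc r) - \<theta> r - n r) * g 0"
proof -
  have "\<theta> r + n r \<le> \<theta> (Suc r)"
    using n_le[of r] strict_mono_Suc_diff_ge_1[OF mono, of r] by linarith
  moreover have "(\<Sum>k\<in>{\<theta> r<..\<theta> (Suc r)}. g (block_indicator \<theta> n k))
      = (\<Sum>k\<in>{\<theta> r<..\<theta> (Suc r)}. if k \<le> \<theta> r + n r then g 1 else g 0)"
    using block_indicator_eq[OF mono n_le] by (intro sum.cong refl) force
  ultimately show ?thesis by (simp add: sum_if_le_split)
qed

lemma lacunary_mean_block_indicator_crisp_zero:
  assumes "strict_mono \<theta>" and "\<And>s. n s \<le> \<theta> (Suc s) - \<theta> s"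
  shows "lacunary_mean \<theta> \<gamma> (\<lambda>k. fdist (crisp (block_indicator \<theta> n k)) (crisp 0) powr p)
       = (\<lambda>r. real (n r) / real (\<theta> (Suc r) - \<theta> r) powr \<gamma>)"
  using sum_block_indicator[OF assms, where g = "\<lambda>y. fdist (crisp y) (crisp 0) powr p"]
  by (simp add: lacunary_mean_def fdist_crisp fun_eq_iff)

lemma lacunary_mean_block_indicator_ge:
  assumes mono: "strict_mono \<theta>" and n_le: "\<And>s. n s \<le> \<theta> (Suc s) - \<theta> s"
    and X0: "fuzzy_number X0" and "0 \<le> p" and half: "2 * n r \<le> \<theta> (Suc r) - \<theta> r"
  shows "real (n r) * (1/2) powr p / real (\<theta> (Suc r) - \<theta> r) powr \<beta>
       \<le> lacunary_mean \<theta> \<beta> (\<lambda>k. fdist (crisp (block_indicator \<theta> n k)) X0 powr p) r"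
proof -
  define D0 D1 where "D0 = fdist (crisp 0) X0 powr p" and "D1 = fdist (crisp 1) X0 powr p"
  have "(1/2) powr p \<le> D1 + D0"
  proof -
    have "1 \<le> fdist (crisp 1) X0 + fdist (crisp 0) X0"
      using abs_diff_le_fdist_crisp_add[OF X0, of 1 0] by simp
    then have "1/2 \<le> fdist (crisp 1) X0 \<or> 1/2 \<le> fdist (crisp 0) X0" by linarith
    then have "(1/2) powr p \<le> D1 \<or> (1/2) powr p \<le> D0"
      unfolding D0_def D1_def using \<open>0 \<le> p\<close> by (auto intro: powr_mono2)
    moreover have "0 \<le> D0" "0 \<le> D1" by (simp_all add: D0_def D1_def)
    ultimately show ?thesis by linarith
  qed
  then have "real (n r) * (1/2) powr p \<le> real (n r) * D1 + real (n r) * D0"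
    by (simp add: mult_left_mono flip: distrib_left)
  also have "\<dots> \<le> real (n r) * D1 + real (\<theta> (Suc r) - \<theta> r - n r) * D0"
    using half by (intro add_left_mono mult_right_mono) (auto simp: D0_def)
  also have "\<dots> = (\<Sum>k\<in>{\<theta> r<..\<theta> (Suc r)}. fdist (crisp (block_indicator \<theta> n k)) X0 powr p)"
    using sum_block_indicator[OF mono n_le, where g = "\<lambda>y. fdist (crisp y) X0 powr p"]
    by (simp add: D0_def D1_def)
  finally show ?thesis
    unfolding lacunary_mean_def by (simp add: divide_right_mono)
qed

lemma lacunary_mean_block_indicator_not_tendsto_zero:
  assumes mono: "strict_mono \<theta>" and n_le: "\<And>s. n s \<le> \<theta> (Suc s) - \<theta> s"
    and X0: "fuzzy_number X0" and p: "0 \<le> p"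
    and n_large: "\<forall>\<^sub>F r in sequentially. real (\<theta> (Suc r) - \<theta> r) powr \<beta> \<le> 2 * real (n r)
                                        \<and> 2 * n r \<le> \<theta> (Suc r) - \<theta> r"
  shows "\<not> lacunary_mean \<theta> \<beta> (\<lambda>k. fdist (crisp (block_indicator \<theta> n k)) X0 powr p) \<longlonglongrightarrow> 0"
proof
  define c :: real where "c = (1/2) powr p / 2"
  have "0 < c" by (simp add: c_def)
  assume "lacunary_mean \<theta> \<beta> (\<lambda>k. fdist (crisp (block_indicator \<theta> n k)) X0 powr p) \<longlonglongrightarrow> 0"
  from order_tendstoD(2)[OF this \<open>0 < c\<close>] n_large
  have "\<forall>\<^sub>F r in sequentially. False"
  proof eventually_elim
    case (elim r)
    let ?H = "real (\<theta> (Suc r) - \<theta> r) powr \<beta>"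
    have "0 < ?H" using strict_mono_Suc_diff_ge_1[OF mono, of r] by simp
    then have "c = ?H / 2 * (1/2) powr p / ?H" by (simp add: c_def)
    also have "\<dots> \<le> real (n r) * (1/2) powr p / ?H"
      using elim(2) \<open>0 < ?H\<close> by (intro divide_right_mono mult_right_mono) auto
    also have "\<dots> \<le> lacunary_mean \<theta> \<beta> (\<lambda>k. fdist (crisp (block_indicator \<theta> n k)) X0 powr p) r"
      by (rule lacunary_mean_block_indicator_ge[OF mono n_le X0 p]) (use elim(2) in simp)
    finally show False using elim(1) by linarith
  qed
  then show False by simp
qed

lemma block_length_exists:
  fixes h :: "nat \<Rightarrow> nat" and \<beta> \<gamma> :: real
  assumes h: "filterlim h at_top sequentially" and "0 < \<beta>" "\<beta> < \<gamma>" "\<gamma> \<le> 1"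
  obtains n :: "nat \<Rightarrow> nat" where "\<And>r. n r \<le> h r"
    and "(\<lambda>r. real (n r) / real (h r) powr \<gamma>) \<longlonglongrightarrow> 0"
    and "\<forall>\<^sub>F r in sequentially. real (h r) powr \<beta> \<le> 2 * real (n r) \<and> 2 * n r \<le> h r"
proof -
  define \<delta> where "\<delta> = (\<beta> + \<gamma>) / 2"
  have \<delta>: "0 < \<delta>" "\<beta> < \<delta>" "\<delta> < \<gamma>" "\<delta> < 1" using assms(2-4) by (auto simp: \<delta>_def)
  define n where "n r = nat \<lfloor>real (h r) powr \<delta>\<rfloor>" for r
  have n_floor: "real (n r) = of_int \<lfloor>real (h r) powr \<delta>\<rfloor>" for r by (simp add: n_def)
  have h_real: "filterlim (\<lambda>r. real (h r)) at_top sequentially"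
    using filterlim_compose[OF filterlim_real_sequentially h] .
  have powr_le_self: "real (h r) powr \<delta> \<le> real (h r)" for r
    using powr_mono[of \<delta> 1 "real (h r)"] \<delta> by (cases "h r = 0") auto
  show ?thesis
  proof
    show "n r \<le> h r" for r
      using n_floor[of r] powr_le_self[of r] by linarith
    have upper: "(\<lambda>r. real (h r) powr (\<delta> - \<gamma>)) \<longlonglongrightarrow> 0"
      using tendsto_neg_powr[OF _ h_real, of "\<delta> - \<gamma>"] \<delta> by simp
    show "(\<lambda>r. real (n r) / real (h r) powr \<gamma>) \<longlonglongrightarrow> 0"
    proof (rule tendsto_sandwich[OF _ _ tendsto_const upper])
      show "\<forall>\<^sub>F r in sequentially. 0 \<le> real (n r) / real (h r) powr \<gamma>" by simp
      show "\<forall>\<^sub>F r in sequentially. real (n r) / real (h r) powr \<gamma> \<le> real (h r) powr (\<delta> - \<gamma>)"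
      proof (rule always_eventually, rule allI)
        fix r
        have "real (n r) \<le> real (h r) powr \<delta>" unfolding n_floor by simp
        then show "real (n r) / real (h r) powr \<gamma> \<le> real (h r) powr (\<delta> - \<gamma>)"
          by (simp add: powr_diff divide_right_mono)
      qed
    qed
    have "\<forall>\<^sub>F r in sequentially. 1 \<le> real (h r)"
      using filterlim_at_top[THEN iffD1, OF h_real, rule_format, of 1] .
    moreover have "\<forall>\<^sub>F r in sequentially. 2 \<le> real (h r) powr \<delta>"
      using filterlim_at_top[THEN iffD1, OF filterlim_compose[OF real_powr_at_top[OF \<delta>(1)] h_real],
          rule_format, of 2] .
    moreover have "\<forall>\<^sub>F r in sequentially. real (h r) powr (\<delta> - 1) < 1/2"
      using \<delta> by (intro order_tendstoD(2)[OF tendsto_neg_powr[OF _ h_real]]) auto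
    ultimately show "\<forall>\<^sub>F r in sequentially. real (h r) powr \<beta> \<le> 2 * real (n r) \<and> 2 * n r \<le> h r"
    proof eventually_elim
      case (elim r)
      have "real (h r) powr \<delta> - 1 \<le> real (n r)" "real (n r) \<le> real (h r) powr \<delta>"
        unfolding n_floor by linarith+
      moreover have "real (h r) powr \<beta> \<le> real (h r) powr \<delta>"
        using elim(1) \<delta> by (intro powr_mono) auto
      moreover have "real (h r) powr \<delta> = real (h r) powr (\<delta> - 1) * real (h r)"
        using elim(1) by (simp add: powr_diff)
      moreover have "real (h r) powr (\<delta> - 1) * real (h r) \<le> 1/2 * real (h r)"
        using elim(1,3) by (intro mult_right_mono) auto
      ultimately have "real (h r) powr \<beta> \<le> 2 * real (n r)" "2 * real (n r) \<le> real (h r)"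
        using elim(2) by linarith+
      then show ?case by simp
    qed
  qed
qed

theorem theorem2p12:
  fixes \<theta> :: "nat \<Rightarrow> nat" and \<beta> \<gamma> p :: real and m :: nat
  assumes "0 < \<beta>" and "\<beta> < \<gamma>" and "\<gamma> \<le> 1" and "0 < p" and "lacunary \<theta>"
  shows "N_theta \<theta> \<beta> p m \<subset> N_theta \<theta> \<gamma> p m"
proof -
  have mono: "strict_mono \<theta>" and gaps: "filterlim (\<lambda>r. \<theta> (Suc r) - \<theta> r) at_top sequentially"
    using \<open>lacunary \<theta>\<close> by (auto simp: lacunary_def)
  obtain n where n_le: "\<And>r. n r \<le> \<theta> (Suc r) - \<theta> r"
    and small: "(\<lambda>r. real (n r) / real (\<theta> (Suc r) - \<theta> r) powr \<gamma>) \<longlonglongrightarrow> 0"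
    and large: "\<forall>\<^sub>F r in sequentially. real (\<theta> (Suc r) - \<theta> r) powr \<beta> \<le> 2 * real (n r)
                                       \<and> 2 * n r \<le> \<theta> (Suc r) - \<theta> r"
    using block_length_exists[OF gaps assms(1-3)] by blast
  define X where "X = (\<lambda>k. crisp ((neg_partial_sums ^^ m) (block_indicator \<theta> n) k))"
  have "X \<in> N_theta \<theta> \<gamma> p m"
    unfolding X_def mem_N_theta_crisp_funpow_neg_partial_sums_iff
  proof (intro exI conjI)
    show "lacunary_mean \<theta> \<gamma> (\<lambda>k. fdist (crisp (block_indicator \<theta> n k)) (crisp 0) powr p) \<longlonglongrightarrow> 0"
      unfolding lacunary_mean_block_indicator_crisp_zero[OF mono n_le] by (rule small)
  qed (rule fuzzy_number_crisp)
  moreover have "X \<notin> N_theta \<theta> \<beta> p m"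
    unfolding X_def mem_N_theta_crisp_funpow_neg_partial_sums_iff
    using lacunary_mean_block_indicator_not_tendsto_zero[OF mono n_le _ _ large] \<open>0 < p\<close> by simp
  ultimately show ?thesis
    using N_theta_exponent_mono[OF mono less_imp_le[OF \<open>\<beta> < \<gamma>\<close>]] by blast
qed

end
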